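(* Let $k\ge 3$, $m\ge 2$. Identify $\mathfrak a=\mathfrak{sl}(2,\mathbb R)\times\mathfrak{gl}(m,\mathbb R)$ with its image in $\mathfrak{gl}(V)=\mathfrak{gl}(V_k)\otimes\mathfrak{gl}(W)$, and consider the $\mathfrak a$-module $\mathfrak{gl}(V)/\mathfrak a$ (with the adjoint action). The space of $y$-invariant elements (elements annihilated by $y$) of $\mathfrak{gl}(V)/\mathfrak a$ is the direct sum of (the images of) the $\mathfrak{gl}(m,\mathbb R)$-modules \[ A_2=\mathbb R y\otimes\mathfrak{sl}(W),\qquad A_{i+1}=\mathbb R y^i\otimes\mathfrak{gl}(W),\quad i=2,\dots,k, \] where $y^i$ denotes the $i$-th power of the endomorphism $y$ of $V_k$. Moreover, for every $\phi\in A_i$ the cochain $c_\phi$ on $\mathfrak g_-=\mathbb R x\oplus V$ given by $c_\phi(x\wedge v)=\phi(v)$, $c_\phi(V\wedge V)=0$, has degree $i$.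
   Context: $x=\begin{pmatrix}0&0\\1&0\end{pmatrix}$, $y=\begin{pmatrix}0&1\\0&0\end{pmatrix}$, $h=\begin{pmatrix}-1&0\\0&1\end{pmatrix}$ in $\mathfrak{sl}(2,\mathbb R)$; $V_k=S^k(\mathbb R^2)$ with basis $v^i=f_2^{k-i}f_1^i/i!$ ($f_1,f_2$ the standard basis of $\mathbb R^2$); $W=\mathbb R^m$ the standard $\mathfrak{gl}(m,\mathbb R)$-module; $V=V_k\otimes W$ with the natural faithful action of $\mathfrak a$. $\mathfrak g=\mathfrak a\ltimes V$ ($V$ abelian ideal) is graded by $\mathfrak g_1=\mathbb R y$, $\mathfrak g_0=\mathbb R h\oplus\mathfrak{gl}(m,\mathbb R)$, $\mathfrak g_{-1}=\mathbb R x\oplus v^k\otimes W$, $\mathfrak g_{-i}=v^{k+1-i}\otimes W$ for $2\le i\le k+1$, and $\mathfrak g_-=\bigoplus_{i<0}\mathfrak g_i=\mathbb R x\oplus V$. A cochain $c\in\operatorname{Hom}(\wedge^2\mathfrak g_-,\mathfrak g)$ has degree $r$ if $c(\mathfrak g_i\wedge\mathfrak g_j)\subset\mathfrak g_{i+j+r}$ for all $i,j$. *)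

theory Defs
  imports Complex_Main
begin

(* V_k = S^k(R^2) has basis v^0..v^k (index j in {0..k}); W = R^m has basis e_0..e_{m-1}.
   V = V_k \<otimes> W has basis v^j \<otimes> e_a, indexed by (j,a) \<in> {0..k} \<times> {0..<m}.
   Endomorphisms of V: matrices (nat\<times>nat) \<Rightarrow> (nat\<times>nat) \<Rightarrow> real,
   entry M p q = coefficient of basis vector p in M(basis vector q). *)

definition IV :: "nat \<Rightarrow> nat \<Rightarrow> (nat \<times> nat) set" where
  "IV k m = {0..k} \<times> {0..<m}"

definition vecV :: "nat \<Rightarrow> nat \<Rightarrow> (nat \<times> nat \<Rightarrow> real) \<Rightarrow> bool" where
  "vecV k m v \<longleftrightarrow> (\<forall>p. p \<notin> IV k m \<longrightarrow> v p = 0)"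

definition glV :: "nat \<Rightarrow> nat \<Rightarrow> (nat \<times> nat \<Rightarrow> nat \<times> nat \<Rightarrow> real) set" where
  "glV k m = {M. \<forall>p q. (p \<notin> IV k m \<or> q \<notin> IV k m) \<longrightarrow> M p q = 0}"

definition glW :: "nat \<Rightarrow> (nat \<Rightarrow> nat \<Rightarrow> real) set" where
  "glW m = {B. \<forall>a b. (a \<ge> m \<or> b \<ge> m) \<longrightarrow> B a b = 0}"

definition slW :: "nat \<Rightarrow> (nat \<Rightarrow> nat \<Rightarrow> real) set" where
  "slW m = {B \<in> glW m. (\<Sum>a<m. B a a) = 0}"

definition idW :: "nat \<Rightarrow> nat \<Rightarrow> nat \<Rightarrow> real" where
  "idW m a b = (if a = b \<and> a < m then 1 else 0)"

definition idK :: "nat \<Rightarrow> nat \<Rightarrow> nat \<Rightarrow> real" where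
  "idK k j i = (if j = i \<and> i \<le> k then 1 else 0)"

(* Matrices of x, y, h acting (as derivations) on V_k in the basis v^i = f2^(k-i) f1^i / i!:
   x f1 = f2, x f2 = 0  ==> x v^i = v^(i-1)  (x v^0 = 0)
   y f2 = f1, y f1 = 0  ==> y v^i = (k-i)(i+1) v^(i+1)  (y v^k = 0)
   h f1 = -f1, h f2 = f2 ==> h v^i = (k-2i) v^i.
   Entry (j,i) = coefficient of v^j in X v^i. *)
definition rho_x :: "nat \<Rightarrow> nat \<Rightarrow> nat \<Rightarrow> real" where
  "rho_x k j i = (if 1 \<le> i \<and> i \<le> k \<and> j = i - 1 then 1 else 0)"

definition rho_y :: "nat \<Rightarrow> nat \<Rightarrow> nat \<Rightarrow> real" where
  "rho_y k j i = (if i < k \<and> j = i + 1 then real ((k - i) * (i + 1)) else 0)"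

definition rho_h :: "nat \<Rightarrow> nat \<Rightarrow> nat \<Rightarrow> real" where
  "rho_h k j i = (if i \<le> k \<and> j = i then real k - 2 * real i else 0)"

definition mmul :: "'i set \<Rightarrow> ('i \<Rightarrow> 'i \<Rightarrow> real) \<Rightarrow> ('i \<Rightarrow> 'i \<Rightarrow> real) \<Rightarrow> 'i \<Rightarrow> 'i \<Rightarrow> real" where
  "mmul S M N p q = (\<Sum>r\<in>S. M p r * N r q)"

fun mpow :: "'i set \<Rightarrow> nat \<Rightarrow> ('i \<Rightarrow> 'i \<Rightarrow> real) \<Rightarrow> 'i \<Rightarrow> 'i \<Rightarrow> real" where
  "mpow S 0 M = (\<lambda>p q. if p = q \<and> p \<in> S then 1 else 0)"
| "mpow S (Suc n) M = mmul S M (mpow S n M)"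

definition commV :: "nat \<Rightarrow> nat \<Rightarrow> (nat \<times> nat \<Rightarrow> nat \<times> nat \<Rightarrow> real) \<Rightarrow> (nat \<times> nat \<Rightarrow> nat \<times> nat \<Rightarrow> real)
    \<Rightarrow> nat \<times> nat \<Rightarrow> nat \<times> nat \<Rightarrow> real" where
  "commV k m M N = (\<lambda>p q. mmul (IV k m) M N p q - mmul (IV k m) N M p q)"

definition tens :: "(nat \<Rightarrow> nat \<Rightarrow> real) \<Rightarrow> (nat \<Rightarrow> nat \<Rightarrow> real) \<Rightarrow> nat \<times> nat \<Rightarrow> nat \<times> nat \<Rightarrow> real" where
  "tens A B = (\<lambda>(j, a) (i, b). A j i * B a b)"

(* image of \<a> = sl(2,R) \<times> gl(m,R) in gl(V): X \<otimes> 1 + 1 \<otimes> B *)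
definition aset :: "nat \<Rightarrow> nat \<Rightarrow> (nat \<times> nat \<Rightarrow> nat \<times> nat \<Rightarrow> real) set" where
  "aset k m = {M. \<exists>\<alpha> \<beta> \<gamma> B. B \<in> glW m \<and>
      M = (\<lambda>p q. tens (\<lambda>j i. \<alpha> * rho_x k j i + \<beta> * rho_y k j i + \<gamma> * rho_h k j i) (idW m) p q
                 + tens (idK k) B p q)}"

definition Yop :: "nat \<Rightarrow> nat \<Rightarrow> nat \<times> nat \<Rightarrow> nat \<times> nat \<Rightarrow> real" where
  "Yop k m = tens (rho_y k) (idW m)"

definition Amod :: "nat \<Rightarrow> nat \<Rightarrow> nat \<Rightarrow> (nat \<times> nat \<Rightarrow> nat \<times> nat \<Rightarrow> real) set" where
  "Amod k m i = (if i = 2 then {M. \<exists>c B. B \<in> slW m \<and> M = tens (\<lambda>a b. c * rho_y k a b) B}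
                 else {M. \<exists>c B. B \<in> glW m \<and> M = tens (\<lambda>a b. c * mpow {0..k} (i - 1) (rho_y k) a b) B})"

(* elements of g = \<a> \<ltimes> V = sl(2) \<oplus> gl(m) \<oplus> V:
   coefficients of x, y, h, a gl(m)-matrix and a vector of V *)
record gel =
  gx :: real
  gy :: real
  gh :: real
  gB :: "nat \<Rightarrow> nat \<Rightarrow> real"
  gv :: "nat \<times> nat \<Rightarrow> real"

(* the homogeneous component g_d of the grading:
   g_1 = R y, g_0 = R h \<oplus> gl(m), g_(-1) = R x \<oplus> v^k \<otimes> W, g_(-i) = v^(k+1-i) \<otimes> W *)
definition gr :: "nat \<Rightarrow> nat \<Rightarrow> int \<Rightarrow> gel set" where
  "gr k m d = {u. gB u \<in> glW m \<and> vecV k m (gv u)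
      \<and> (gx u \<noteq> 0 \<longrightarrow> d = -1) \<and> (gy u \<noteq> 0 \<longrightarrow> d = 1) \<and> (gh u \<noteq> 0 \<longrightarrow> d = 0)
      \<and> (gB u \<noteq> (\<lambda>a b. 0) \<longrightarrow> d = 0)
      \<and> (\<forall>j a. gv u (j, a) \<noteq> 0 \<longrightarrow> d = - (int k + 1 - int j))}"

(* a cochain c : \<wedge>^2 g_- \<rightarrow> g (given as an alternating bilinear map on g_-) has degree r *)
definition cochain_degree :: "nat \<Rightarrow> nat \<Rightarrow> (gel \<Rightarrow> gel \<Rightarrow> gel) \<Rightarrow> int \<Rightarrow> bool" where
  "cochain_degree k m c r \<longleftrightarrow>
     (\<forall>i j u w. i < 0 \<longrightarrow> j < 0 \<longrightarrow> u \<in> gr k m i \<longrightarrow> w \<in> gr k m j \<longrightarrow> c u w \<in> gr k m (i + j + r))"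

definition mapp :: "nat \<Rightarrow> nat \<Rightarrow> (nat \<times> nat \<Rightarrow> nat \<times> nat \<Rightarrow> real) \<Rightarrow> (nat \<times> nat \<Rightarrow> real) \<Rightarrow> nat \<times> nat \<Rightarrow> real" where
  "mapp k m M v p = (\<Sum>q\<in>IV k m. M p q * v q)"

(* c_\<phi>: the alternating bilinear map on g_- = R x \<oplus> V with c(x \<wedge> v) = \<phi>(v), c(V \<wedge> V) = 0:
   c(\<alpha> x + v, \<alpha>' x + v') = \<alpha> \<phi>(v') - \<alpha>' \<phi>(v) *)
definition cphi :: "nat \<Rightarrow> nat \<Rightarrow> (nat \<times> nat \<Rightarrow> nat \<times> nat \<Rightarrow> real) \<Rightarrow> gel \<Rightarrow> gel \<Rightarrow> gel" where
  "cphi k m \<phi> u w = \<lparr>gx = 0, gy = 0, gh = 0, gB = (\<lambda>a b. 0),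
      gv = (\<lambda>p. gx u * mapp k m \<phi> (gv w) p - gx w * mapp k m \<phi> (gv u) p)\<rparr>"

end

theory Submission
  imports Defs
begin

text \<open>
In the basis \<open>v\<^sup>j \<otimes> e\<^sub>a\<close>, \<open>y\<close> sends \<open>v\<^sup>i\<close> to \<open>c i \<cdot> v\<^sup>i\<^sup>+\<^sup>1\<close> with
\<open>c i = (k - i)(i + 1)\<close>, which is positive for \<open>i < k\<close>. Hence \<open>[y, F] = 0\<close> determines the column
\<open>(i + 1, b)\<close> of \<open>F\<close> from the column \<open>(i, b)\<close>, and the \<open>y\<close>-invariant matrices are exactly the sums
of \<open>y\<^sup>n \<otimes> C\<^sub>n\<close>, \<open>n = 0, \<dots>, k\<close>.
If \<open>[y, \<phi>]\<close> lies in \<open>\<aa>\<close>, telescoping its entries along the superdiagonal and along the diagonal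
shows that it has neither an \<open>x\<close>-component nor a gl(W)-component. So \<open>[y, \<phi>] = [y, P \<otimes> 1]\<close>
for some \<open>P\<close> in sl(2), and \<open>\<phi> - P \<otimes> 1\<close> is \<open>y\<close>-invariant. Modulo \<open>\<aa>\<close>, which contains
\<open>y \<otimes> 1\<close> and \<open>1 \<otimes> gl(W)\<close>, the invariants \<open>y\<^sup>n \<otimes> C\<^sub>n\<close> reduce to elements of
\<open>A\<^sub>2, \<dots>, A\<^sub>k\<^sub>+\<^sub>1\<close>, and the column \<open>0\<close> of such a sum shows that it lies in \<open>\<aa>\<close> only if
all summands vanish. Finally \<open>y\<^sup>i\<^sup>-\<^sup>1\<close> raises the \<open>V\<^sub>k\<close>-index by \<open>i - 1\<close> while \<open>x\<close> has
degree \<open>-1\<close>, so \<open>c\<^sub>\<phi>\<close> has degree \<open>i\<close>.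
\<close>

definition ycoeff :: "nat \<Rightarrow> nat \<Rightarrow> real" where
  "ycoeff k i = real ((k - i) * (i + 1))"

definition ycoeff_prod :: "nat \<Rightarrow> nat \<Rightarrow> nat \<Rightarrow> real" where
  "ycoeff_prod k i n = (\<Prod>t\<in>{i..<i+n}. ycoeff k t)"

definition ypow :: "nat \<Rightarrow> nat \<Rightarrow> nat \<Rightarrow> nat \<Rightarrow> real" where
  "ypow k n j i = (if j = i + n \<and> j \<le> k then ycoeff_prod k i n else 0)"

lemma ycoeff_pos: "i < k \<Longrightarrow> ycoeff k i > 0"
  unfolding ycoeff_def by (simp only: of_nat_0_less_iff) simp

lemma ycoeff_nonneg: "ycoeff k i \<ge> 0"
  by (simp add: ycoeff_def)

lemma ycoeff_self [simp]: "ycoeff k k = 0"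
  by (simp add: ycoeff_def)

lemma ycoeff_of_nat: "i \<le> k \<Longrightarrow> ycoeff k i = (real k - real i) * (real i + 1)"
  unfolding ycoeff_def by (simp only: of_nat_mult of_nat_diff of_nat_add of_nat_1)

lemma rho_y_ycoeff: "rho_y k j i = (if i < k \<and> j = i + 1 then ycoeff k i else 0)"
  by (simp add: rho_y_def ycoeff_def)

lemma ycoeff_prod_pos: "i + n \<le> k \<Longrightarrow> ycoeff_prod k i n > 0"
  unfolding ycoeff_prod_def by (rule prod_pos) (auto intro: ycoeff_pos)

lemma ycoeff_prod_0 [simp]: "ycoeff_prod k i 0 = 1"
  by (simp add: ycoeff_prod_def)

lemma ycoeff_prod_1 [simp]: "ycoeff_prod k i (Suc 0) = ycoeff k i"
  by (simp add: ycoeff_prod_def)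

lemma ycoeff_prod_Suc: "ycoeff_prod k i (Suc n) = ycoeff_prod k i n * ycoeff k (i + n)"
  unfolding ycoeff_prod_def by (simp add: prod.atLeastLessThan_Suc)

lemma ycoeff_prod_Suc': "ycoeff_prod k i (Suc n) = ycoeff k i * ycoeff_prod k (Suc i) n"
  unfolding ycoeff_prod_def by (simp add: prod.atLeast_Suc_lessThan)

lemma rho_y_eq_ypow: "rho_y k = ypow k 1"
  by (auto simp: fun_eq_iff rho_y_ycoeff ypow_def)

lemma idK_eq_ypow: "idK k = ypow k 0"
  by (auto simp: fun_eq_iff idK_def ypow_def)

lemma ypow_col0: "ypow k n j 0 = (if j = n \<and> j \<le> k then ycoeff_prod k 0 n else 0)"
  by (simp add: ypow_def)

lemma idW_in_glW: "idW m \<in> glW m"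
  by (simp add: glW_def idW_def)

lemma zero_in_glW: "(\<lambda>a b. 0) \<in> glW m"
  by (simp add: glW_def)

lemma trace_idW: "(\<Sum>a<m. idW m a a) = real m"
  by (simp add: idW_def)

lemma sum_rho_y_left:
  "(\<Sum>l\<in>{0..k}. rho_y k j l * h l) = (if 1 \<le> j \<and> j \<le> k then ycoeff k (j - 1) * h (j - 1) else 0)"
proof -
  have "(\<Sum>l\<in>{0..k}. rho_y k j l * h l)
      = (\<Sum>l\<in>{0..k}. if l = j - 1 then (if 1 \<le> j \<and> j \<le> k then ycoeff k (j - 1) * h (j - 1) else 0) else 0)"
    by (rule sum.cong) (auto simp: rho_y_ycoeff)
  then show ?thesis
    by (auto simp: sum.delta)
qed

lemma sum_rho_y_right:
  "(\<Sum>l\<in>{0..k}. h l * rho_y k l i) = (if i < k then h (i + 1) * ycoeff k i else 0)"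
proof -
  have "(\<Sum>l\<in>{0..k}. h l * rho_y k l i)
      = (\<Sum>l\<in>{0..k}. if l = i + 1 then (if i < k then h (i + 1) * ycoeff k i else 0) else 0)"
    by (rule sum.cong) (auto simp: rho_y_ycoeff)
  then show ?thesis
    by (simp add: sum.delta)
qed

lemma sum_idW_left: "(\<Sum>c\<in>{0..<m}. idW m a c * g c) = (if a < m then g a else 0)"
proof -
  have "(\<Sum>c\<in>{0..<m}. idW m a c * g c) = (\<Sum>c\<in>{0..<m}. if c = a then (if a < m then g a else 0) else 0)"
    by (rule sum.cong) (auto simp: idW_def)
  then show ?thesis
    by (simp add: sum.delta)
qed

lemma sum_idW_right: "(\<Sum>c\<in>{0..<m}. g c * idW m c b) = (if b < m then g b else 0)"
proof -
  have "(\<Sum>c\<in>{0..<m}. g c * idW m c b) = (\<Sum>c\<in>{0..<m}. if c = b then (if b < m then g b else 0) else 0)"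
    by (rule sum.cong) (auto simp: idW_def)
  then show ?thesis
    by (simp add: sum.delta)
qed

lemma mpow_rho_y: "mpow {0..k} n (rho_y k) = ypow k n"
proof (induction n)
  case 0
  show ?case
    by (auto simp: fun_eq_iff ypow_def)
next
  case (Suc n)
  show ?case
  proof (intro ext)
    fix j i
    have "mpow {0..k} (Suc n) (rho_y k) j i = (\<Sum>l\<in>{0..k}. rho_y k j l * ypow k n l i)"
      by (simp add: Suc mmul_def)
    also have "\<dots> = (if 1 \<le> j \<and> j \<le> k then ycoeff k (j - 1) * ypow k n (j - 1) i else 0)"
      by (rule sum_rho_y_left)
    also have "\<dots> = ypow k (Suc n) j i"
      by (auto simp: ypow_def ycoeff_prod_Suc mult.commute)
    finally show "mpow {0..k} (Suc n) (rho_y k) j i = ypow k (Suc n) j i" .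
  qed
qed

subsection \<open>The adjoint action of \<open>y\<close> in coordinates\<close>

definition ad_yK :: "nat \<Rightarrow> (nat \<Rightarrow> nat \<Rightarrow> real) \<Rightarrow> nat \<Rightarrow> nat \<Rightarrow> real" where
  "ad_yK k A j i = (if 1 \<le> j \<and> j \<le> k then ycoeff k (j - 1) * A (j - 1) i else 0)
     - (if i < k then A j (i + 1) * ycoeff k i else 0)"

definition ad_y :: "nat \<Rightarrow> nat \<Rightarrow> (nat \<times> nat \<Rightarrow> nat \<times> nat \<Rightarrow> real) \<Rightarrow> nat \<Rightarrow> nat \<Rightarrow> nat \<Rightarrow> nat \<Rightarrow> real" where
  "ad_y k m F j a i b = (if 1 \<le> j \<and> j \<le> k \<and> a < m then ycoeff k (j - 1) * F (j - 1, a) (i, b) else 0)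
     - (if i < k \<and> b < m then F (j, a) (i + 1, b) * ycoeff k i else 0)"

lemma mmul_IV: "mmul (IV k m) M N p q = (\<Sum>l\<in>{0..k}. \<Sum>c\<in>{0..<m}. M p (l, c) * N (l, c) q)"
  unfolding mmul_def IV_def by (simp add: sum.cartesian_product)

lemma commV_Yop: "commV k m (Yop k m) F (j, a) (i, b) = ad_y k m F j a i b"
proof -
  have "mmul (IV k m) (Yop k m) F (j, a) (i, b)
      = (\<Sum>l\<in>{0..k}. rho_y k j l * (\<Sum>c\<in>{0..<m}. idW m a c * F (l, c) (i, b)))"
    unfolding mmul_IV Yop_def tens_def by (simp add: sum_distrib_left mult.assoc)
  also have "\<dots> = (\<Sum>l\<in>{0..k}. rho_y k j l * (if a < m then F (l, a) (i, b) else 0))"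
    by (simp add: sum_idW_left)
  also have "\<dots> = (if 1 \<le> j \<and> j \<le> k \<and> a < m then ycoeff k (j - 1) * F (j - 1, a) (i, b) else 0)"
    by (subst sum_rho_y_left) auto
  finally have left: "mmul (IV k m) (Yop k m) F (j, a) (i, b) = \<dots>" .
  have "mmul (IV k m) F (Yop k m) (j, a) (i, b)
      = (\<Sum>l\<in>{0..k}. (\<Sum>c\<in>{0..<m}. F (j, a) (l, c) * idW m c b) * rho_y k l i)"
    unfolding mmul_IV Yop_def tens_def by (simp add: sum_distrib_right sum_distrib_left mult_ac)
  also have "\<dots> = (\<Sum>l\<in>{0..k}. (if b < m then F (j, a) (l, b) else 0) * rho_y k l i)"
    by (simp add: sum_idW_right)
  also have "\<dots> = (if i < k \<and> b < m then F (j, a) (i + 1, b) * ycoeff k i else 0)"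
    by (subst sum_rho_y_right) auto
  finally have right: "mmul (IV k m) F (Yop k m) (j, a) (i, b) = \<dots>" .
  show ?thesis
    unfolding commV_def ad_y_def left right by simp
qed

lemma ad_y_add: "ad_y k m (\<lambda>p q. F p q + G p q) j a i b = ad_y k m F j a i b + ad_y k m G j a i b"
  by (simp add: ad_y_def algebra_simps)

lemma ad_y_diff: "ad_y k m (\<lambda>p q. F p q - G p q) j a i b = ad_y k m F j a i b - ad_y k m G j a i b"
  by (simp add: ad_y_def algebra_simps)

lemma ad_y_sum: "ad_y k m (\<lambda>p q. \<Sum>n\<in>N. G n p q) j a i b = (\<Sum>n\<in>N. ad_y k m (G n) j a i b)"
proof -
  have sum_if: "(\<Sum>n\<in>N. if c then f n else 0) = (if c then (\<Sum>n\<in>N. f n) else (0::real))" for c f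
    by simp
  show ?thesis
    unfolding ad_y_def sum_subtractf by (simp add: sum_if sum_distrib_left sum_distrib_right)
qed

lemma ad_y_tens: "B \<in> glW m \<Longrightarrow> ad_y k m (tens A B) j a i b = ad_yK k A j i * B a b"
  by (auto simp: ad_y_def ad_yK_def tens_def glW_def algebra_simps)

lemma ad_yK_lin:
  "ad_yK k (\<lambda>j i. x * X j i + y * Y j i + z * Z j i) j i = x * ad_yK k X j i + y * ad_yK k Y j i + z * ad_yK k Z j i"
  by (simp add: ad_yK_def algebra_simps)

lemma ad_yK_scale: "ad_yK k (\<lambda>j i. c * X j i) j i = c * ad_yK k X j i"
  by (simp add: ad_yK_def algebra_simps)

text \<open>The entries of \<open>y\<^sup>n\<close> are shift-invariant products of the \<open>c i\<close>, so \<open>y\<^sup>n\<close> commutes with \<open>y\<close>.\<close>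

lemma ad_yK_ypow [simp]: "ad_yK k (ypow k n) j i = 0"
proof -
  have "ycoeff k (i + n) * ycoeff_prod k i n = ycoeff_prod k (Suc i) n * ycoeff k i"
    by (metis ycoeff_prod_Suc ycoeff_prod_Suc' mult.commute)
  then show ?thesis
    by (auto simp: ad_yK_def ypow_def)
qed

lemma ad_yK_rho_x: "ad_yK k (rho_x k) j i = - rho_h k j i"
  by (auto simp: ad_yK_def rho_x_def rho_h_def ycoeff_of_nat of_nat_diff algebra_simps Suc_le_eq)

lemma ad_yK_rho_h: "ad_yK k (rho_h k) j i = 2 * rho_y k j i"
  by (auto simp: ad_yK_def rho_y_ycoeff rho_h_def ycoeff_of_nat algebra_simps)

subsection \<open>The image of \<open>\<aa>\<close> in \<open>gl(V)\<close>\<close>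

definition aelem :: "nat \<Rightarrow> nat \<Rightarrow> real \<Rightarrow> real \<Rightarrow> real \<Rightarrow> (nat \<Rightarrow> nat \<Rightarrow> real) \<Rightarrow> nat \<times> nat \<Rightarrow> nat \<times> nat \<Rightarrow> real" where
  "aelem k m \<alpha> \<beta> \<gamma> B = (\<lambda>p q. tens (\<lambda>j i. \<alpha> * rho_x k j i + \<beta> * rho_y k j i + \<gamma> * rho_h k j i) (idW m) p q
      + tens (idK k) B p q)"

lemma mem_aset_iff: "M \<in> aset k m \<longleftrightarrow> (\<exists>\<alpha> \<beta> \<gamma> B. B \<in> glW m \<and> M = aelem k m \<alpha> \<beta> \<gamma> B)"
  by (simp add: aset_def aelem_def)

lemma aelem_apply:
  "aelem k m \<alpha> \<beta> \<gamma> B (j, a) (i, b)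
     = (\<alpha> * rho_x k j i + \<beta> * rho_y k j i + \<gamma> * rho_h k j i) * idW m a b + idK k j i * B a b"
  by (simp add: aelem_def tens_def)

lemma aelem_add:
  "(\<lambda>p q. aelem k m \<alpha> \<beta> \<gamma> B p q + aelem k m \<alpha>' \<beta>' \<gamma>' B' p q)
     = aelem k m (\<alpha> + \<alpha>') (\<beta> + \<beta>') (\<gamma> + \<gamma>') (\<lambda>a b. B a b + B' a b)"
  by (auto simp: fun_eq_iff aelem_def tens_def algebra_simps)

lemma zero_in_aset: "(\<lambda>p q. 0) \<in> aset k m"
proof -
  have "(\<lambda>p q. 0) = aelem k m 0 0 0 (\<lambda>a b. 0)"
    by (auto simp: fun_eq_iff aelem_def tens_def)
  then show ?thesis
    using zero_in_glW mem_aset_iff by blast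
qed

lemma ad_y_aelem:
  assumes "B \<in> glW m"
  shows "ad_y k m (aelem k m \<alpha> \<beta> \<gamma> B) j a i b = aelem k m 0 (2 * \<gamma>) (- \<alpha>) (\<lambda>a b. 0) (j, a) (i, b)"
  unfolding aelem_def ad_y_add ad_y_tens[OF idW_in_glW] ad_y_tens[OF assms] ad_yK_lin
  by (simp add: ad_yK_rho_x ad_yK_rho_h rho_y_eq_ypow idK_eq_ypow tens_def)

lemma Amod_iff:
  assumes "i \<in> {2..k+1}"
  shows "M \<in> Amod k m i \<longleftrightarrow>
    (\<exists>c B. B \<in> glW m \<and> (i = 2 \<longrightarrow> (\<Sum>a<m. B a a) = 0) \<and> M = tens (\<lambda>a b. c * ypow k (i - 1) a b) B)"
  using assms unfolding Amod_def mpow_rho_y by (auto simp: slW_def rho_y_eq_ypow numeral_2_eq_2)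

lemma ad_y_Amod: "i \<in> {2..k+1} \<Longrightarrow> \<psi> \<in> Amod k m i \<Longrightarrow> ad_y k m \<psi> j a i' b = 0"
  by (auto simp: Amod_iff ad_y_tens ad_yK_scale)

lemma mapp_tens_ypow_nonzero:
  assumes "B \<in> glW m" and "mapp k m (tens (\<lambda>a b. c * ypow k n a b) B) v (j, a) \<noteq> 0"
  obtains j0 b where "v (j0, b) \<noteq> 0" "j = j0 + n" "j \<le> k" "a < m"
proof -
  from assms(2) obtain q where q: "tens (\<lambda>a b. c * ypow k n a b) B (j, a) q * v q \<noteq> 0"
    unfolding mapp_def by (meson sum.not_neutral_contains_not_neutral)
  obtain j0 b where qq: "q = (j0, b)"
    by (cases q)
  have "B a b \<noteq> 0" "ypow k n j j0 \<noteq> 0" "v (j0, b) \<noteq> 0"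
    using q qq by (auto simp: tens_def)
  moreover from \<open>B a b \<noteq> 0\<close> have "a < m"
    using assms(1) leI unfolding glW_def by blast
  moreover from \<open>ypow k n j j0 \<noteq> 0\<close> have "j = j0 + n" "j \<le> k"
    by (auto simp: ypow_def split: if_splits)
  ultimately show ?thesis
    using that by blast
qed

lemma cochain_degree_cphi_Amod:
  assumes "r \<in> {2..k+1}" and "\<phi> \<in> Amod k m r"
  shows "cochain_degree k m (cphi k m \<phi>) (int r)"
  unfolding cochain_degree_def
proof (intro allI impI)
  obtain c B where B: "B \<in> glW m" and phi: "\<phi> = tens (\<lambda>a b. c * ypow k (r - 1) a b) B"
    using assms Amod_iff by blast
  have r2: "r \<ge> 2"
    using assms(1) by auto
  note nz = mapp_tens_ypow_nonzero[OF B, where c = c and n = "r - 1" and k = k, folded phi]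
  fix i j u w
  assume u: "u \<in> gr k m i" and w: "w \<in> gr k m j"
  have vec: "vecV k m (\<lambda>p. gx u * mapp k m \<phi> (gv w) p - gx w * mapp k m \<phi> (gv u) p)"
    unfolding vecV_def
  proof (intro allI impI)
    fix p
    assume "p \<notin> IV k m"
    then obtain j' a where "p = (j', a)" "\<not> (j' \<le> k \<and> a < m)"
      by (cases p) (auto simp: IV_def)
    then have "mapp k m \<phi> (gv w) p = 0" "mapp k m \<phi> (gv u) p = 0"
      using nz by metis+
    then show "gx u * mapp k m \<phi> (gv w) p - gx w * mapp k m \<phi> (gv u) p = 0"
      by simp
  qed
  have deg: "i + j + int r = - (int k + 1 - int j')"
    if "gx u * mapp k m \<phi> (gv w) (j', a) - gx w * mapp k m \<phi> (gv u) (j', a) \<noteq> 0" for j' a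
  proof -
    have "(gx u \<noteq> 0 \<and> mapp k m \<phi> (gv w) (j', a) \<noteq> 0) \<or> (gx w \<noteq> 0 \<and> mapp k m \<phi> (gv u) (j', a) \<noteq> 0)"
      using that by auto
    then consider "gx u \<noteq> 0" "mapp k m \<phi> (gv w) (j', a) \<noteq> 0" | "gx w \<noteq> 0" "mapp k m \<phi> (gv u) (j', a) \<noteq> 0"
      by blast
    then show ?thesis
    proof cases
      case 1
      obtain j0 b where "gv w (j0, b) \<noteq> 0" "j' = j0 + (r - 1)"
        using nz 1(2) by metis
      moreover have "i = -1" "j = - (int k + 1 - int j0)"
        using u w 1(1) \<open>gv w (j0, b) \<noteq> 0\<close> by (auto simp: gr_def)
      ultimately show ?thesis
        using r2 by auto
    next
      case 2
      obtain j0 b where "gv u (j0, b) \<noteq> 0" "j' = j0 + (r - 1)"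
        using nz 2(2) by metis
      moreover have "j = -1" "i = - (int k + 1 - int j0)"
        using u w 2(1) \<open>gv u (j0, b) \<noteq> 0\<close> by (auto simp: gr_def)
      ultimately show ?thesis
        using r2 by auto
    qed
  qed
  show "cphi k m \<phi> u w \<in> gr k m (i + j + int r)"
    unfolding gr_def cphi_def using vec deg by (auto simp: glW_def)
qed


lemma aelem_col0:
  assumes "1 \<le> n" "n \<le> k"
  shows "aelem k m \<alpha> \<beta> \<gamma> B (n, a) (0, b) = (if n = 1 then \<beta> * ycoeff k 0 * idW m a b else 0)"
  using assms by (auto simp: aelem_apply rho_x_def rho_y_ycoeff rho_h_def idK_def)

text \<open>Only \<open>A\<^sub>n\<^sub>+\<^sub>1\<close> contributes to the entries \<open>((n, a), (0, b))\<close>, whereas \<open>\<aa>\<close> has nonzero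
  entries there only for \<open>n = 1\<close>, where they are a multiple of the identity on \<open>W\<close>;
  the trace condition on \<open>A\<^sub>2\<close> kills that multiple.\<close>

lemma Amod_sum_in_aset_imp_zero:
  assumes "0 < k" "0 < m"
    and psi: "\<forall>i\<in>{2..k+1}. \<psi> i \<in> Amod k m i"
    and sum: "(\<lambda>p q. \<Sum>i\<in>{2..k+1}. \<psi> i p q) \<in> aset k m"
    and i: "i \<in> {2..k+1}"
  shows "\<psi> i = (\<lambda>p q. 0)"
proof -
  have "\<forall>i\<in>{2..k+1}. \<exists>c B. B \<in> glW m \<and> (i = 2 \<longrightarrow> (\<Sum>a<m. B a a) = 0)
      \<and> \<psi> i = tens (\<lambda>a b. c * ypow k (i - 1) a b) B"
    using psi Amod_iff by blast
  then obtain cf Bf where cB: "\<And>i. i \<in> {2..k+1} \<Longrightarrow> Bf i \<in> glW m \<and> (i = 2 \<longrightarrow> (\<Sum>a<m. Bf i a a) = 0)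
      \<and> \<psi> i = tens (\<lambda>a b. cf i * ypow k (i - 1) a b) (Bf i)"
    by metis
  have psi_apply: "\<psi> i (j, a) (i', b) = cf i * ypow k (i - 1) j i' * Bf i a b" if "i \<in> {2..k+1}" for i j a i' b
    using cB[OF that] by (simp add: tens_def)
  obtain \<alpha> \<beta> \<gamma> B where sum_eq: "(\<lambda>p q. \<Sum>i\<in>{2..k+1}. \<psi> i p q) = aelem k m \<alpha> \<beta> \<gamma> B"
    using sum mem_aset_iff by blast
  have col: "cf (n + 1) * ycoeff_prod k 0 n * Bf (n + 1) a b = (if n = 1 then \<beta> * ycoeff k 0 * idW m a b else 0)"
    if n: "1 \<le> n" "n \<le> k" for n a b
  proof -
    have "(\<Sum>i\<in>{2..k+1}. \<psi> i (n, a) (0, b))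
        = (\<Sum>i\<in>{2..k+1}. if i = n + 1 then cf (n + 1) * ycoeff_prod k 0 n * Bf (n + 1) a b else 0)"
      by (rule sum.cong) (use n in \<open>auto simp: psi_apply ypow_col0\<close>)
    also have "\<dots> = cf (n + 1) * ycoeff_prod k 0 n * Bf (n + 1) a b"
      using n by (simp add: sum.delta)
    finally have "cf (n + 1) * ycoeff_prod k 0 n * Bf (n + 1) a b = aelem k m \<alpha> \<beta> \<gamma> B (n, a) (0, b)"
      using fun_cong[OF fun_cong[OF sum_eq, of "(n, a)"], of "(0, b)"] by simp
    then show ?thesis
      using aelem_col0[OF n] by simp
  qed
  have col_pos: "ycoeff_prod k 0 (i - 1) > 0"
    using i by (intro ycoeff_prod_pos) auto
  have "cf i * Bf i a b = 0" for a b
  proof (cases "i = 2")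
    case False
    have "1 \<le> i - 1" "i - 1 \<le> k" "i - 1 \<noteq> 1" "i - 1 + 1 = i"
      using i False by auto
    then have "cf i * ycoeff_prod k 0 (i - 1) * Bf i a b = 0"
      using col[of "i - 1" a b] by simp
    then show ?thesis
      using col_pos by simp
  next
    case True
    have e: "cf 2 * Bf 2 a b = \<beta> * idW m a b" for a b
      using col[of 1 a b] \<open>0 < k\<close> ycoeff_pos[of 0 k] by (simp add: numeral_2_eq_2)
    have "\<beta> * real m = (\<Sum>a<m. \<beta> * idW m a a)"
      by (simp add: trace_idW flip: sum_distrib_left)
    also have "\<dots> = cf 2 * (\<Sum>a<m. Bf 2 a a)"
      by (simp add: e sum_distrib_left)
    also have "\<dots> = 0"
      using cB[of 2] \<open>0 < k\<close> by auto
    finally have "\<beta> = 0"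
      using \<open>0 < m\<close> by simp
    then show ?thesis
      using True e by simp
  qed
  then show ?thesis
    by (auto simp: fun_eq_iff psi_apply[OF i])
qed

lemma commV_Yop_aset_plus_Amod:
  assumes a0: "a0 \<in> aset k m" and psi: "\<forall>i\<in>{2..k+1}. \<psi> i \<in> Amod k m i"
  shows "commV k m (Yop k m) (\<lambda>p q. a0 p q + (\<Sum>i\<in>{2..k+1}. \<psi> i p q)) \<in> aset k m"
proof -
  obtain \<alpha> \<beta> \<gamma> B where B: "B \<in> glW m" and a0_eq: "a0 = aelem k m \<alpha> \<beta> \<gamma> B"
    using a0 mem_aset_iff by blast
  have "commV k m (Yop k m) (\<lambda>p q. a0 p q + (\<Sum>i\<in>{2..k+1}. \<psi> i p q))
      = aelem k m 0 (2 * \<gamma>) (- \<alpha>) (\<lambda>a b. 0)"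
  proof (intro ext)
    fix p q :: "nat \<times> nat"
    obtain j a i b where pq: "p = (j, a)" "q = (i, b)"
      by (cases p, cases q)
    have "(\<Sum>r\<in>{2..k+1}. ad_y k m (\<psi> r) j a i b) = 0"
      using psi ad_y_Amod by simp
    then show "commV k m (Yop k m) (\<lambda>p q. a0 p q + (\<Sum>i\<in>{2..k+1}. \<psi> i p q)) p q
        = aelem k m 0 (2 * \<gamma>) (- \<alpha>) (\<lambda>a b. 0) p q"
      unfolding pq commV_Yop ad_y_add ad_y_sum a0_eq ad_y_aelem[OF B] by simp
  qed
  then show ?thesis
    using zero_in_glW mem_aset_iff by blast
qed


subsection \<open>Matrices whose commutator with \<open>y\<close> lies in \<open>\<aa>\<close>\<close>

lemma sum_lessThan_Suc_shift_diff:
  "(\<Sum>j<Suc n. (if 1 \<le> j then G (j - 1) else 0) - G j) = - (G n :: real)"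
  by (induction n) auto

lemma sum_h_weights: "(\<Sum>j<Suc k. real k - 2 * real j) = 0"
proof -
  have "(\<Sum>j<Suc n. real k - 2 * real j) = real (Suc n) * real k - real n * (real n + 1)" for n
    by (induction n) (auto simp: algebra_simps)
  from this[of k] show ?thesis
    by (simp add: algebra_simps)
qed

text \<open>On the superdiagonal, \<open>c j\<close> times the entry \<open>((j, 0), (j + 1, 0))\<close> of \<open>[y, \<phi>]\<close>
  telescopes in \<open>G t\<close> below, while the \<open>x\<close>-part contributes \<open>\<alpha> (c 0 + \<dots> + c (k - 1))\<close>.\<close>

lemma commV_Yop_eq_aelem_imp_x_zero:
  assumes "0 < k" "0 < m" and comm: "commV k m (Yop k m) \<phi> = aelem k m \<alpha> \<beta> \<gamma> B"
  shows "\<alpha> = 0"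
proof -
  define G where "G t = ycoeff k t * ycoeff k (t + 1) * \<phi> (t, 0) (t + 2, 0)" for t
  have Gj: "ycoeff k j * \<alpha> = (if 1 \<le> j then G (j - 1) else 0) - G j" if j: "j < k" for j
  proof -
    have "ad_y k m \<phi> j 0 (j + 1) 0 = \<alpha>"
      using fun_cong[OF fun_cong[OF comm, of "(j, 0)"], of "(j + 1, 0)"] j \<open>0 < m\<close>
      by (simp add: commV_Yop aelem_apply rho_x_def rho_y_ycoeff rho_h_def idK_def idW_def)
    moreover have "G j = (if j + 1 < k then ycoeff k j * (\<phi> (j, 0) (j + 1 + 1, 0) * ycoeff k (j + 1)) else 0)"
      using j by (cases "Suc j = k") (auto simp: G_def numeral_2_eq_2)
    moreover have "(if 1 \<le> j then G (j - 1) else 0)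
        = (if 1 \<le> j then ycoeff k j * (ycoeff k (j - 1) * \<phi> (j - 1, 0) (j + 1, 0)) else 0)"
      by (cases j) (auto simp: G_def)
    then have "ycoeff k j * ad_y k m \<phi> j 0 (j + 1) 0 = (if 1 \<le> j then G (j - 1) else 0) - G j"
      using calculation(2) j \<open>0 < m\<close> by (simp add: ad_y_def right_diff_distrib)
    ultimately show ?thesis
      by simp
  qed
  have "(\<Sum>j<k. ycoeff k j) * \<alpha> = (\<Sum>j<k. (if 1 \<le> j then G (j - 1) else 0) - G j)"
    by (simp add: sum_distrib_right Gj)
  also have "\<dots> = - G (k - 1)"
    using sum_lessThan_Suc_shift_diff[of G "k - 1"] \<open>0 < k\<close> by simp
  also have "\<dots> = 0"
    using \<open>0 < k\<close> by (simp add: G_def)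
  finally have "(\<Sum>j<k. ycoeff k j) * \<alpha> = 0" .
  moreover have "(\<Sum>j<k. ycoeff k j) > 0"
    by (rule sum_pos2[of _ 0]) (use \<open>0 < k\<close> in \<open>auto intro: ycoeff_pos ycoeff_nonneg\<close>)
  ultimately show ?thesis
    by simp
qed

text \<open>On the diagonal the \<open>gl(W)\<close>-part contributes \<open>(k + 1) B\<close>, the \<open>h\<close>-part contributes the
  trace of \<open>h\<close>, which is zero, and the entries of \<open>[y, \<phi>]\<close> telescope.\<close>

lemma commV_Yop_eq_aelem_imp_gl_zero:
  assumes B: "B \<in> glW m" and comm: "commV k m (Yop k m) \<phi> = aelem k m \<alpha> \<beta> \<gamma> B"
  shows "B = (\<lambda>a b. 0)"
proof (intro ext)
  fix a b
  show "B a b = 0"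
  proof (cases "a < m \<and> b < m")
    case False
    then show ?thesis
      using B leI unfolding glW_def by blast
  next
    case True
    define H where "H t = ycoeff k t * \<phi> (t, a) (t + 1, b)" for t
    have Hj: "\<gamma> * (real k - 2 * real j) * idW m a b + B a b = (if 1 \<le> j then H (j - 1) else 0) - H j"
      if j: "j < Suc k" for j
    proof -
      have "rho_x k j j = 0"
        by (auto simp: rho_x_def)
      then have "ad_y k m \<phi> j a j b = \<gamma> * (real k - 2 * real j) * idW m a b + B a b"
        using fun_cong[OF fun_cong[OF comm, of "(j, a)"], of "(j, b)"] j
        by (simp add: commV_Yop aelem_apply rho_y_ycoeff rho_h_def idK_def)
      moreover have "H j = (if j < k then \<phi> (j, a) (j + 1, b) * ycoeff k j else 0)"
        using j by (cases "j = k") (auto simp: H_def)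
      moreover have "(if 1 \<le> j then H (j - 1) else 0) = (if 1 \<le> j then ycoeff k (j - 1) * \<phi> (j - 1, a) (j, b) else 0)"
        by (cases j) (auto simp: H_def)
      ultimately show ?thesis
        using j True by (simp add: ad_y_def)
    qed
    have "(\<Sum>j<Suc k. \<gamma> * idW m a b * (real k - 2 * real j)) + real (Suc k) * B a b
        = (\<Sum>j<Suc k. \<gamma> * (real k - 2 * real j) * idW m a b + B a b)"
      by (simp add: sum.distrib mult_ac)
    also have "\<dots> = (\<Sum>j<Suc k. (if 1 \<le> j then H (j - 1) else 0) - H j)"
      by (rule sum.cong) (auto simp: Hj)
    also have "\<dots> = - H k"
      by (rule sum_lessThan_Suc_shift_diff)
    also have "\<dots> = 0"
      by (simp add: H_def)
    finally show ?thesis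
      unfolding sum_distrib_left[symmetric] sum_h_weights by simp
  qed
qed


subsection \<open>The \<open>y\<close>-invariants of \<open>gl(V)\<close>\<close>

text \<open>\<open>ad y F = 0\<close> expresses the column \<open>(i + 1, b)\<close> of \<open>F\<close> through the column \<open>(i, b)\<close>,
  so an invariant matrix vanishing on the columns \<open>(0, b)\<close> vanishes.\<close>

lemma ad_y_kernel_col0_zero:
  assumes out: "\<And>j a i b. \<not> (j \<le> k \<and> a < m \<and> i \<le> k \<and> b < m) \<Longrightarrow> D (j, a) (i, b) = 0"
    and inv: "\<And>j a i b. ad_y k m D j a i b = 0"
    and col0: "\<And>j a b. D (j, a) (0, b) = 0"
  shows "D (j, a) (i, b) = 0"
proof (induction i arbitrary: j a b)
  case 0
  show ?case
    by (rule col0)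
next
  case (Suc i)
  show ?case
  proof (cases "i < k \<and> b < m")
    case True
    have "D (j - 1, a) (i, b) = 0"
      by (rule Suc.IH)
    then have left: "(if 1 \<le> j \<and> j \<le> k \<and> a < m then ycoeff k (j - 1) * D (j - 1, a) (i, b) else 0) = 0"
      by (simp only: mult_zero_right if_cancel)
    have "D (j, a) (i + 1, b) * ycoeff k i = 0"
      using inv[of j a i b] True unfolding ad_y_def left by simp
    then show ?thesis
      using ycoeff_pos[of i k] True by simp
  next
    case False
    then show ?thesis
      using out by auto
  qed
qed

lemma ad_y_kernel:
  assumes F: "F \<in> glV k m" and inv: "\<And>j a i b. ad_y k m F j a i b = 0"
  obtains C where "\<And>n. C n \<in> glW m" and "F = (\<lambda>p q. \<Sum>n\<in>{0..k}. tens (ypow k n) (C n) p q)"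
proof -
  have F_out: "F (j, a) (i, b) = 0" if "\<not> (j \<le> k \<and> a < m \<and> i \<le> k \<and> b < m)" for j a i b
    using F that by (auto simp: glV_def IV_def)
  define C where "C n a b = F (n, a) (0, b) / ycoeff_prod k 0 n" for n a b
  have C: "C n \<in> glW m" for n
    unfolding glW_def C_def using F_out by auto
  define S where "S = (\<lambda>p q. \<Sum>n\<in>{0..k}. tens (ypow k n) (C n) p q)"
  have S_apply: "S (j, a) (i, b) = (\<Sum>n\<in>{0..k}. ypow k n j i * C n a b)" for j a i b
    by (simp add: S_def tens_def)
  have S_out: "S (j, a) (i, b) = 0" if out: "\<not> (j \<le> k \<and> a < m \<and> i \<le> k \<and> b < m)" for j a i b
    unfolding S_apply
  proof (rule sum.neutral, rule ballI)
    fix n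
    show "ypow k n j i * C n a b = 0"
      using out C[of n] leI unfolding glW_def by (cases "a < m \<and> b < m") (auto simp: ypow_def)
  qed
  have S_col0: "S (j, a) (0, b) = F (j, a) (0, b)" if "j \<le> k" for j a b
  proof -
    have "S (j, a) (0, b) = (\<Sum>n\<in>{0..k}. if n = j then ycoeff_prod k 0 j * C j a b else 0)"
      unfolding S_apply by (rule sum.cong) (auto simp: ypow_col0)
    also have "\<dots> = F (j, a) (0, b)"
      using that ycoeff_prod_pos[of 0 j k] by (simp add: C_def)
    finally show ?thesis .
  qed
  define D where "D = (\<lambda>p q. F p q - S p q)"
  have "D (j, a) (i, b) = 0" for j a i b
  proof (rule ad_y_kernel_col0_zero)
    show "D (j, a) (i, b) = 0" if "\<not> (j \<le> k \<and> a < m \<and> i \<le> k \<and> b < m)" for j a i b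
      using that F_out S_out by (simp add: D_def)
    show "ad_y k m D j a i b = 0" for j a i b
      unfolding D_def S_def ad_y_diff ad_y_sum by (simp add: ad_y_tens C inv)
    show "D (j, a) (0, b) = 0" for j a b
      using S_col0 F_out S_out by (cases "j \<le> k") (auto simp: D_def)
  qed
  then have "F = S"
    by (auto simp: fun_eq_iff D_def)
  then show ?thesis
    using that C unfolding S_def by blast
qed

text \<open>Modulo \<open>\<aa>\<close>, \<open>y\<^sup>0 \<otimes> C\<^sub>0 = 1 \<otimes> C\<^sub>0\<close> and the trace part of \<open>y \<otimes> C\<^sub>1\<close> disappear.\<close>

lemma sum_tens_ypow_decompose:
  assumes "0 < k" "0 < m" and C: "\<And>n. C n \<in> glW m"
  obtains a0 \<psi> where "a0 \<in> aset k m" "\<forall>i\<in>{2..k+1}. \<psi> i \<in> Amod k m i"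
    and "(\<lambda>p q. \<Sum>n\<in>{0..k}. tens (ypow k n) (C n) p q) = (\<lambda>p q. a0 p q + (\<Sum>i\<in>{2..k+1}. \<psi> i p q))"
proof -
  define t where "t = (\<Sum>a<m. C 1 a a) / real m"
  define C1 where "C1 a b = C 1 a b - t * idW m a b" for a b
  define a0 where "a0 = aelem k m 0 t 0 (C 0)"
  define \<psi> where "\<psi> i = tens (ypow k (i - 1)) (if i = 2 then C1 else C (i - 1))" for i
  have "C1 \<in> glW m"
    using C[of 1] by (auto simp: glW_def C1_def idW_def)
  moreover have "(\<Sum>a<m. C1 a a) = (\<Sum>a<m. C 1 a a) - t * (\<Sum>a<m. idW m a a)"
    by (simp add: C1_def sum_subtractf sum_distrib_left)
  then have "(\<Sum>a<m. C1 a a) = 0"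
    using \<open>0 < m\<close> by (simp add: trace_idW t_def)
  ultimately have "\<forall>i\<in>{2..k+1}. \<psi> i \<in> Amod k m i"
    using C unfolding \<psi>_def by (auto simp: Amod_iff intro!: exI[of _ 1]) blast
  moreover have "a0 \<in> aset k m"
    using C mem_aset_iff unfolding a0_def by blast
  moreover have "(\<lambda>p q. \<Sum>n\<in>{0..k}. tens (ypow k n) (C n) p q) = (\<lambda>p q. a0 p q + (\<Sum>i\<in>{2..k+1}. \<psi> i p q))"
  proof (intro ext)
    fix p q :: "nat \<times> nat"
    obtain j a i b where pq: "p = (j, a)" "q = (i, b)"
      by (cases p, cases q)
    have "{2..k+1} = {Suc 1..Suc k}"
      by simp
    then have "(\<Sum>r\<in>{2..k+1}. \<psi> r (j, a) (i, b)) = (\<Sum>n\<in>{1..k}. \<psi> (Suc n) (j, a) (i, b))"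
      by (simp only: sum.shift_bounds_cl_Suc_ivl)
    also have "\<dots> = (\<Sum>n\<in>{1..k}. ypow k n j i * C n a b - (if n = 1 then ypow k 1 j i * t * idW m a b else 0))"
      by (rule sum.cong) (auto simp: \<psi>_def C1_def tens_def algebra_simps)
    also have "\<dots> = (\<Sum>n\<in>{1..k}. ypow k n j i * C n a b) - ypow k 1 j i * t * idW m a b"
      using \<open>0 < k\<close> by (simp add: sum_subtractf sum.delta)
    finally have "(\<Sum>r\<in>{2..k+1}. \<psi> r (j, a) (i, b)) = \<dots>" .
    moreover have "(\<Sum>n\<in>{0..k}. ypow k n j i * C n a b) = ypow k 0 j i * C 0 a b + (\<Sum>n\<in>{1..k}. ypow k n j i * C n a b)"
      by (simp add: sum.atLeast_Suc_atMost)
    ultimately show "(\<Sum>n\<in>{0..k}. tens (ypow k n) (C n) p q) = a0 p q + (\<Sum>i\<in>{2..k+1}. \<psi> i p q)"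
      unfolding pq a0_def by (simp add: aelem_apply tens_def rho_y_eq_ypow idK_eq_ypow rho_x_def rho_h_def)
  qed
  ultimately show ?thesis
    using that by blast
qed


lemma aelem_in_glV: "B \<in> glW m \<Longrightarrow> aelem k m \<alpha> \<beta> \<gamma> B \<in> glV k m"
  by (auto simp: glV_def IV_def glW_def aelem_def tens_def rho_x_def rho_y_def rho_h_def idW_def idK_def)

lemma aset_add:
  assumes "M \<in> aset k m" "N \<in> aset k m"
  shows "(\<lambda>p q. M p q + N p q) \<in> aset k m"
proof -
  obtain \<alpha> \<beta> \<gamma> B \<alpha>' \<beta>' \<gamma>' B' where "B \<in> glW m" "B' \<in> glW m"
    and "M = aelem k m \<alpha> \<beta> \<gamma> B" "N = aelem k m \<alpha>' \<beta>' \<gamma>' B'"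
    using assms mem_aset_iff by metis
  then have "(\<lambda>a b. B a b + B' a b) \<in> glW m"
    and "(\<lambda>p q. M p q + N p q) = aelem k m (\<alpha> + \<alpha>') (\<beta> + \<beta>') (\<gamma> + \<gamma>') (\<lambda>a b. B a b + B' a b)"
    by (simp_all add: glW_def aelem_add)
  then show ?thesis
    using mem_aset_iff by blast
qed

lemma commV_Yop_in_aset_imp_decompose:
  assumes "0 < k" "0 < m" and \<phi>: "\<phi> \<in> glV k m" and comm: "commV k m (Yop k m) \<phi> \<in> aset k m"
  obtains a0 \<psi> where "a0 \<in> aset k m" "\<forall>i\<in>{2..k+1}. \<psi> i \<in> Amod k m i"
    and "\<phi> = (\<lambda>p q. a0 p q + (\<Sum>i\<in>{2..k+1}. \<psi> i p q))"
proof -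
  obtain \<alpha> \<beta> \<gamma> B where B: "B \<in> glW m" and comm_eq: "commV k m (Yop k m) \<phi> = aelem k m \<alpha> \<beta> \<gamma> B"
    using comm mem_aset_iff by blast
  have "\<alpha> = 0"
    using commV_Yop_eq_aelem_imp_x_zero[OF \<open>0 < k\<close> \<open>0 < m\<close> comm_eq] .
  moreover have "B = (\<lambda>a b. 0)"
    using commV_Yop_eq_aelem_imp_gl_zero[OF B comm_eq] .
  ultimately have comm_sl2: "commV k m (Yop k m) \<phi> = aelem k m 0 \<beta> \<gamma> (\<lambda>a b. 0)"
    using comm_eq by simp
  define P where "P = aelem k m (- \<gamma>) 0 (\<beta> / 2) (\<lambda>a b. 0)"
  have "P \<in> glV k m"
    unfolding P_def by (rule aelem_in_glV[OF zero_in_glW])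
  then have inv_glV: "(\<lambda>p q. \<phi> p q - P p q) \<in> glV k m"
    using \<phi> unfolding glV_def by simp
  have inv: "ad_y k m (\<lambda>p q. \<phi> p q - P p q) j a i b = 0" for j a i b
  proof -
    have "ad_y k m P j a i b = aelem k m 0 \<beta> \<gamma> (\<lambda>a b. 0) (j, a) (i, b)"
      unfolding P_def ad_y_aelem[OF zero_in_glW] by simp
    then show ?thesis
      using fun_cong[OF fun_cong[OF comm_sl2, of "(j, a)"], of "(i, b)"]
      unfolding ad_y_diff commV_Yop by simp
  qed
  obtain C where C: "\<And>n. C n \<in> glW m"
    and eq1: "(\<lambda>p q. \<phi> p q - P p q) = (\<lambda>p q. \<Sum>n\<in>{0..k}. tens (ypow k n) (C n) p q)"
    using ad_y_kernel[OF inv_glV inv] by blast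
  obtain a0 \<psi> where a0: "a0 \<in> aset k m" and \<psi>: "\<forall>i\<in>{2..k+1}. \<psi> i \<in> Amod k m i"
    and eq2: "(\<lambda>p q. \<Sum>n\<in>{0..k}. tens (ypow k n) (C n) p q) = (\<lambda>p q. a0 p q + (\<Sum>i\<in>{2..k+1}. \<psi> i p q))"
    by (rule sum_tens_ypow_decompose[OF \<open>0 < k\<close> \<open>0 < m\<close> C])
  have "\<phi> p q = (P p q + a0 p q) + (\<Sum>i\<in>{2..k+1}. \<psi> i p q)" for p q
    using fun_cong[OF fun_cong[OF eq1, of p], of q] fun_cong[OF fun_cong[OF eq2, of p], of q] by simp
  then have decomp: "\<phi> = (\<lambda>p q. (P p q + a0 p q) + (\<Sum>i\<in>{2..k+1}. \<psi> i p q))"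
    by (intro ext)
  have "P \<in> aset k m"
    unfolding P_def mem_aset_iff using zero_in_glW by blast
  from aset_add[OF this a0] \<psi> decomp show ?thesis
    by (rule that)
qed

theorem theorem2:
  fixes k m :: nat
  assumes "k \<ge> 3" and "m \<ge> 2"
  shows "(\<forall>\<phi> \<in> glV k m.
            commV k m (Yop k m) \<phi> \<in> aset k m \<longleftrightarrow>
            (\<exists>a0 \<in> aset k m. \<exists>\<psi>. (\<forall>i\<in>{2..k+1}. \<psi> i \<in> Amod k m i) \<and>
                \<phi> = (\<lambda>p q. a0 p q + (\<Sum>i\<in>{2..k+1}. \<psi> i p q))))
       \<and> (\<forall>\<psi>. (\<forall>i\<in>{2..k+1}. \<psi> i \<in> Amod k m i) \<longrightarrow>
              (\<lambda>p q. \<Sum>i\<in>{2..k+1}. \<psi> i p q) \<in> aset k m \<longrightarrow>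
              (\<forall>i\<in>{2..k+1}. \<psi> i \<in> aset k m))
       \<and> (\<forall>i\<in>{2..k+1}. \<forall>\<phi> \<in> Amod k m i. cochain_degree k m (cphi k m \<phi>) (int i))"
proof (intro conjI ballI allI impI)
  have k: "0 < k" and m: "0 < m"
    using assms by auto
  show "commV k m (Yop k m) \<phi> \<in> aset k m \<longleftrightarrow>
      (\<exists>a0 \<in> aset k m. \<exists>\<psi>. (\<forall>i\<in>{2..k+1}. \<psi> i \<in> Amod k m i) \<and>
          \<phi> = (\<lambda>p q. a0 p q + (\<Sum>i\<in>{2..k+1}. \<psi> i p q)))" if \<phi>: "\<phi> \<in> glV k m" for \<phi>
  proof
    assume "commV k m (Yop k m) \<phi> \<in> aset k m"
    then obtain a0 \<psi> where "a0 \<in> aset k m" "\<forall>i\<in>{2..k+1}. \<psi> i \<in> Amod k m i"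
      and "\<phi> = (\<lambda>p q. a0 p q + (\<Sum>i\<in>{2..k+1}. \<psi> i p q))"
      using commV_Yop_in_aset_imp_decompose[OF k m \<phi>] by blast
    then show "\<exists>a0 \<in> aset k m. \<exists>\<psi>. (\<forall>i\<in>{2..k+1}. \<psi> i \<in> Amod k m i) \<and>
        \<phi> = (\<lambda>p q. a0 p q + (\<Sum>i\<in>{2..k+1}. \<psi> i p q))"
      by blast
  next
    assume "\<exists>a0 \<in> aset k m. \<exists>\<psi>. (\<forall>i\<in>{2..k+1}. \<psi> i \<in> Amod k m i) \<and>
        \<phi> = (\<lambda>p q. a0 p q + (\<Sum>i\<in>{2..k+1}. \<psi> i p q))"
    then show "commV k m (Yop k m) \<phi> \<in> aset k m"
      using commV_Yop_aset_plus_Amod by blast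
  qed
  show "\<psi> i \<in> aset k m"
    if "\<forall>i\<in>{2..k+1}. \<psi> i \<in> Amod k m i" "(\<lambda>p q. \<Sum>i\<in>{2..k+1}. \<psi> i p q) \<in> aset k m" "i \<in> {2..k+1}"
    for \<psi> i
    using Amod_sum_in_aset_imp_zero[OF k m that] zero_in_aset by simp
  show "cochain_degree k m (cphi k m \<phi>) (int i)" if "i \<in> {2..k+1}" "\<phi> \<in> Amod k m i" for i \<phi>
    using cochain_degree_cphi_Amod[OF that] .
qed

end
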